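(* Let $v,u$ be integrable functions on $[0,\infty)$ and let $z_1,z_2,\gamma_1,\gamma_2$ be integrable functions on $[0,\infty)$ such that $$z_1(x)\le v(x)\le z_2(x)\quad\text{and}\quad \gamma_1(x)\le u(x)\le\gamma_2(x)\quad\text{for all }x\in[0,\infty).$$ Then for all $x>0$, $\alpha>0$, $\delta>0$, $\rho>0$ and $\beta,\lambda,\eta,k\in\mathbb{R}$, writing $A f=\,{}^{\rho}\mathcal{J}^{\alpha,\beta}_{\eta,k}f(x)$, $D f=\,{}^{\rho}\mathcal{J}^{\delta,\lambda}_{\eta,k}f(x)$, $\Lambda_1=\Lambda^{\rho,\beta}_{x,k}(\alpha,\eta)$, $\Lambda_2=\Lambda^{\rho,\lambda}_{x,k}(\delta,\eta)$, $$\Big|\Lambda_2\,A(uv)+\Lambda_1\,D(vu)-Du\,Av-Dv\,Au\Big|\le\sqrt{K(v,z_1,z_2)\,K(u,\gamma_1,\gamma_2)},$$ where for functions $\varphi,\psi,\omega$, $$\begin{aligned}K(\varphi,\psi,\omega)={}&(D\omega-D\varphi)(A\varphi-A\psi)+(D\varphi-D\psi)(A\omega-A\varphi)\\ &-D\omega\,A\varphi-D\varphi\,A\omega-D\varphi\,A\psi-D\psi\,A\varphi+D\omega\,A\psi+D\psi\,A\omega\\ &+\Lambda_2\big[A(\psi\varphi)+A(\omega\varphi)-A(\psi\omega)\big]+\Lambda_1\big[D(\psi\varphi)+D(\omega\varphi)-D(\psi\omega)\big].\end{aligned}$$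
   Context: For a function $f$ on $[0,\infty)$, $x>0$, $\alpha>0$, $\rho>0$ and $\beta,\eta,k\in\mathbb{R}$, the generalized Katugampola fractional integral is $${}^{\rho}\mathcal{J}^{\alpha,\beta}_{\eta,k}f(x)=\frac{\rho^{1-\beta}x^{k}}{\Gamma(\alpha)}\int_0^x\frac{\tau^{\rho(\eta+1)-1}}{(x^\rho-\tau^\rho)^{1-\alpha}}f(\tau)\,d\tau,$$ defined whenever the integral exists; all such integrals appearing are assumed to exist. The operator applied to a product of functions means applied to the pointwise product. Also $$\Lambda^{\rho,\beta}_{x,k}(\alpha,\eta)=\frac{\Gamma(\eta+1)}{\Gamma(\eta+\alpha+1)}\rho^{-\beta}x^{k+\rho(\eta+\alpha)}.$$ *)

theory Defs
  imports "HOL-Analysis.Analysis"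
begin

definition kat_kernel :: "real \<Rightarrow> real \<Rightarrow> real \<Rightarrow> real \<Rightarrow> real \<Rightarrow> real" where
  "kat_kernel \<rho> \<alpha> \<eta> x \<tau> =
     \<tau> powr (\<rho> * (\<eta> + 1) - 1) / (x powr \<rho> - \<tau> powr \<rho>) powr (1 - \<alpha>)"

definition kat_J :: "real \<Rightarrow> real \<Rightarrow> real \<Rightarrow> real \<Rightarrow> real \<Rightarrow> (real \<Rightarrow> real) \<Rightarrow> real \<Rightarrow> real" where
  "kat_J \<rho> \<alpha> \<beta> \<eta> k f x =
     \<rho> powr (1 - \<beta>) * x powr k / Gamma \<alpha> *
     (LINT \<tau>:{0<..<x}|lborel. kat_kernel \<rho> \<alpha> \<eta> x \<tau> * f \<tau>)"

definition kat_exists :: "real \<Rightarrow> real \<Rightarrow> real \<Rightarrow> (real \<Rightarrow> real) \<Rightarrow> real \<Rightarrow> bool" where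
  "kat_exists \<rho> \<alpha> \<eta> f x =
     set_integrable lborel {0<..<x} (\<lambda>\<tau>. kat_kernel \<rho> \<alpha> \<eta> x \<tau> * f \<tau>)"

definition kat_Lambda :: "real \<Rightarrow> real \<Rightarrow> real \<Rightarrow> real \<Rightarrow> real \<Rightarrow> real \<Rightarrow> real" where
  "kat_Lambda \<rho> \<beta> x k \<alpha> \<eta> =
     Gamma (\<eta> + 1) / Gamma (\<eta> + \<alpha> + 1) * \<rho> powr (- \<beta>) * x powr (k + \<rho> * (\<eta> + \<alpha>))"

definition kat_K :: "((real \<Rightarrow> real) \<Rightarrow> real) \<Rightarrow> ((real \<Rightarrow> real) \<Rightarrow> real) \<Rightarrow> real \<Rightarrow> real
    \<Rightarrow> (real \<Rightarrow> real) \<Rightarrow> (real \<Rightarrow> real) \<Rightarrow> (real \<Rightarrow> real) \<Rightarrow> real" where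
  "kat_K A D L1 L2 \<phi> \<psi> \<omega> =
     (D \<omega> - D \<phi>) * (A \<phi> - A \<psi>) + (D \<phi> - D \<psi>) * (A \<omega> - A \<phi>)
     - D \<omega> * A \<phi> - D \<phi> * A \<omega> - D \<phi> * A \<psi> - D \<psi> * A \<phi> + D \<omega> * A \<psi> + D \<psi> * A \<omega>
     + L2 * (A (\<lambda>t. \<psi> t * \<phi> t) + A (\<lambda>t. \<omega> t * \<phi> t) - A (\<lambda>t. \<psi> t * \<omega> t))
     + L1 * (D (\<lambda>t. \<psi> t * \<phi> t) + D (\<lambda>t. \<omega> t * \<phi> t) - D (\<lambda>t. \<psi> t * \<omega> t))"

end

theory Submission
  imports Defs
begin

text \<open>
  Both fractional integrals are integrals against nonnegative weights on \<open>(0, x)\<close>; call them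
  \<open>A\<close> and \<open>D\<close>. The left-hand side is \<open>H(u, v)\<close> for the symmetric bilinear form
  \<open>H(f, g) = D 1 \<cdot> A (f g) + A 1 \<cdot> D (f g) - D f \<cdot> A g - D g \<cdot> A f\<close>, once one knows that
  \<open>A 1 = \<Lambda>\<^sub>1\<close> and \<open>D 1 = \<Lambda>\<^sub>2\<close>; this is a Beta integral after the substitution
  \<open>\<tau> = x s\<^bsup>1/\<rho>\<^esup>\<close> (integrability of the kernel forces \<open>\<eta> > -1\<close>). By Cauchy-Schwarz
  for each weighted integral and AM-GM, \<open>H\<close> is positive semidefinite, so
  \<open>\<bar>H(u, v)\<bar> \<le> sqrt (H(u, u) H(v, v))\<close>. Finally \<open>(z\<^sub>2 - v)(v - z\<^sub>1) \<ge> 0\<close> bounds \<open>v\<^sup>2\<close>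
  by \<open>z\<^sub>1 v + z\<^sub>2 v - z\<^sub>1 z\<^sub>2\<close>, which turns \<open>H(v, v)\<close> into \<open>K(v, z\<^sub>1, z\<^sub>2)\<close>, and likewise
  for \<open>u\<close>.
\<close>

lemma discriminant_le_of_quadratic_nonneg:
  fixes p q r :: real
  assumes "0 \<le> r" and nonneg: "\<And>t. 0 \<le> p + 2 * q * t + r * t\<^sup>2"
  shows "q\<^sup>2 \<le> p * r"
proof (cases "r = 0")
  case True
  show ?thesis
  proof (rule ccontr)
    assume "\<not> ?thesis"
    with True have "q \<noteq> 0" by auto
    have "0 \<le> p + 2 * q * (- (p + 1) / (2 * q)) + r * (- (p + 1) / (2 * q))\<^sup>2"
      by (rule nonneg)
    also have "\<dots> = -1" using True \<open>q \<noteq> 0\<close> by (simp add: field_simps)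
    finally show False by simp
  qed
next
  case False
  with assms(1) have r: "0 < r" by simp
  have "0 \<le> p + 2 * q * (- q / r) + r * (- q / r)\<^sup>2" by (rule nonneg)
  also have "\<dots> = p - q\<^sup>2 / r" using r by (simp add: field_simps power2_eq_square)
  finally show ?thesis using r by (simp add: field_simps)
qed

lemma two_mult_le_of_squares_le:
  fixes a d X Y p q :: real
  assumes "0 \<le> a" "0 \<le> d" "0 \<le> X" "0 \<le> Y" "p\<^sup>2 \<le> a * X" "q\<^sup>2 \<le> d * Y"
  shows "2 * p * q \<le> d * X + a * Y"
proof -
  have "(2 * p * q)\<^sup>2 = 4 * p\<^sup>2 * q\<^sup>2" by (simp add: power2_eq_square)
  also have "\<dots> \<le> 4 * (a * X) * (d * Y)"
    using assms by (intro mult_mono mult_left_mono) auto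
  also have "\<dots> \<le> (d * X + a * Y)\<^sup>2"
    using sum_squares_ge_zero[of "d * X - a * Y" 0] by (simp add: power2_eq_square algebra_simps)
  finally have "(2 * p * q)\<^sup>2 \<le> (d * X + a * Y)\<^sup>2" .
  moreover have "0 \<le> d * X + a * Y" using assms by simp
  ultimately show ?thesis by (rule power2_le_imp_le)
qed

lemma mult_self_le_of_between:
  fixes a b y :: real
  assumes "a \<le> y" "y \<le> b"
  shows "y * y \<le> a * y + b * y - a * b"
proof -
  have "0 \<le> (b - y) * (y - a)" using assms by simp
  then show ?thesis by (simp add: algebra_simps)
qed

section \<open>Integrals against a nonnegative weight\<close>

definition weighted_integrable :: "(real \<Rightarrow> real) \<Rightarrow> real set \<Rightarrow> (real \<Rightarrow> real) \<Rightarrow> bool" where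
  "weighted_integrable W S f \<longleftrightarrow> set_integrable lborel S (\<lambda>t. W t * f t)"

definition weighted_integral :: "(real \<Rightarrow> real) \<Rightarrow> real set \<Rightarrow> (real \<Rightarrow> real) \<Rightarrow> real" where
  "weighted_integral W S f = (LINT t:S|lborel. W t * f t)"

lemma weighted_integrable_add:
  "weighted_integrable W S f \<Longrightarrow> weighted_integrable W S g \<Longrightarrow>
    weighted_integrable W S (\<lambda>t. f t + g t)"
  unfolding weighted_integrable_def by (simp add: distrib_left)

lemma weighted_integral_add:
  "weighted_integrable W S f \<Longrightarrow> weighted_integrable W S g \<Longrightarrow>
    weighted_integral W S (\<lambda>t. f t + g t) = weighted_integral W S f + weighted_integral W S g"
  unfolding weighted_integrable_def weighted_integral_def by (simp add: distrib_left)

lemma weighted_integrable_diff: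
  "weighted_integrable W S f \<Longrightarrow> weighted_integrable W S g \<Longrightarrow>
    weighted_integrable W S (\<lambda>t. f t - g t)"
  unfolding weighted_integrable_def by (simp add: right_diff_distrib)

lemma weighted_integral_diff:
  "weighted_integrable W S f \<Longrightarrow> weighted_integrable W S g \<Longrightarrow>
    weighted_integral W S (\<lambda>t. f t - g t) = weighted_integral W S f - weighted_integral W S g"
  unfolding weighted_integrable_def weighted_integral_def by (simp add: right_diff_distrib)

lemma weighted_integrable_cmult:
  "weighted_integrable W S f \<Longrightarrow> weighted_integrable W S (\<lambda>t. c * f t)"
  unfolding weighted_integrable_def by (simp add: mult.left_commute[of _ c])

lemma weighted_integral_cmult:
  "weighted_integral W S (\<lambda>t. c * f t) = c * weighted_integral W S f"
  unfolding weighted_integral_def by (simp add: mult.left_commute[of _ c])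

lemma weighted_integral_cong:
  assumes "\<And>t. t \<in> S \<Longrightarrow> f t = g t"
  shows "weighted_integral W S f = weighted_integral W S g"
proof -
  have "(\<lambda>t. indicator S t *\<^sub>R (W t * f t)) = (\<lambda>t. indicator S t *\<^sub>R (W t * g t))"
    using assms by (auto simp: indicator_def)
  then show ?thesis unfolding weighted_integral_def set_lebesgue_integral_def by simp
qed

lemma weighted_integral_mono:
  assumes "\<And>t. 0 \<le> W t" "weighted_integrable W S f" "weighted_integrable W S g"
    and "\<And>t. t \<in> S \<Longrightarrow> f t \<le> g t"
  shows "weighted_integral W S f \<le> weighted_integral W S g"
  using assms unfolding weighted_integrable_def weighted_integral_def
  by (intro set_integral_mono) (auto intro: mult_left_mono)

lemma weighted_integral_nonneg:
  assumes "\<And>t. 0 \<le> W t" and "\<And>t. t \<in> S \<Longrightarrow> 0 \<le> f t"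
  shows "0 \<le> weighted_integral W S f"
  unfolding weighted_integral_def set_lebesgue_integral_def
  using assms by (intro Bochner_Integration.integral_nonneg) (auto simp: indicator_def)

lemmas weighted_integral_linear =
  weighted_integrable_add weighted_integral_add weighted_integrable_diff weighted_integral_diff
  weighted_integrable_cmult weighted_integral_cmult

lemma weighted_integral_Cauchy_Schwarz:
  assumes W: "\<And>t. 0 \<le> W t"
    and int: "weighted_integrable W S (\<lambda>_. 1)" "weighted_integrable W S f"
      "weighted_integrable W S (\<lambda>t. f t * f t)"
  shows "(weighted_integral W S f)\<^sup>2
    \<le> weighted_integral W S (\<lambda>_. 1) * weighted_integral W S (\<lambda>t. f t * f t)"
proof -
  let ?I = "weighted_integral W S"
  have "(- ?I f)\<^sup>2 \<le> ?I (\<lambda>t. f t * f t) * ?I (\<lambda>_. 1)"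
  proof (rule discriminant_le_of_quadratic_nonneg)
    show "0 \<le> ?I (\<lambda>_. 1)" by (rule weighted_integral_nonneg[OF W]) simp
    fix c :: real
    have int_c: "weighted_integrable W S (\<lambda>t. f t * f t - 2 * c * f t)"
      using int by (intro weighted_integrable_diff weighted_integrable_cmult)
    have "0 \<le> ?I (\<lambda>t. (f t - c)\<^sup>2)" by (rule weighted_integral_nonneg[OF W]) simp
    also have "?I (\<lambda>t. (f t - c)\<^sup>2) = ?I (\<lambda>t. (f t * f t - 2 * c * f t) + c\<^sup>2 * 1)"
      by (rule weighted_integral_cong) (simp add: power2_eq_square algebra_simps)
    also have "\<dots> = ?I (\<lambda>t. f t * f t) - 2 * c * ?I f + c\<^sup>2 * ?I (\<lambda>_. 1)"
      using int int_c
      by (simp only: weighted_integral_add weighted_integral_diff weighted_integral_cmult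
          weighted_integrable_cmult)
    finally show "0 \<le> ?I (\<lambda>t. f t * f t) + 2 * (- ?I f) * c + ?I (\<lambda>_. 1) * c\<^sup>2"
      by (simp add: algebra_simps)
  qed
  then show ?thesis by (simp add: mult.commute)
qed

lemma weighted_integrable_square_between:
  assumes W: "\<And>t. 0 \<le> W t" and u: "set_borel_measurable lborel S u" "weighted_integrable W S u"
    and int: "weighted_integrable W S (\<lambda>t. g1 t * u t)" "weighted_integrable W S (\<lambda>t. g2 t * u t)"
      "weighted_integrable W S (\<lambda>t. g1 t * g2 t)"
    and between: "\<And>t. t \<in> S \<Longrightarrow> g1 t \<le> u t \<and> u t \<le> g2 t"
  shows "weighted_integrable W S (\<lambda>t. u t * u t)"
proof -
  let ?g = "\<lambda>t. g1 t * u t + g2 t * u t - g1 t * g2 t"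
  have "weighted_integrable W S ?g"
    using int by (intro weighted_integrable_diff weighted_integrable_add)
  then have "integrable lborel (\<lambda>t. indicator S t *\<^sub>R (W t * ?g t))"
    unfolding weighted_integrable_def set_integrable_def .
  moreover have "(\<lambda>t. indicator S t *\<^sub>R (W t * (u t * u t))) \<in> borel_measurable lborel"
  proof -
    have "(\<lambda>t. indicator S t *\<^sub>R (W t * (u t * u t)))
        = (\<lambda>t. (indicator S t *\<^sub>R (W t * u t)) * (indicator S t *\<^sub>R u t))"
      by (auto simp: indicator_def fun_eq_iff)
    then show ?thesis
      using u unfolding weighted_integrable_def set_integrable_def set_borel_measurable_def
      by (simp add: borel_measurable_integrable)
  qed
  moreover have "AE t in lborel.
      norm (indicator S t *\<^sub>R (W t * (u t * u t))) \<le> norm (indicator S t *\<^sub>R (W t * ?g t))"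
  proof (rule AE_I2)
    fix t
    show "norm (indicator S t *\<^sub>R (W t * (u t * u t))) \<le> norm (indicator S t *\<^sub>R (W t * ?g t))"
    proof (cases "t \<in> S")
      case True
      have "u t * u t \<le> ?g t" using between[OF True] by (simp add: mult_self_le_of_between)
      with W[of t] True show ?thesis by (simp add: abs_mult mult_left_mono)
    qed simp
  qed
  ultimately show ?thesis
    unfolding weighted_integrable_def set_integrable_def by (rule Bochner_Integration.integrable_bound)
qed

lemma weighted_integral_square_between:
  assumes W: "\<And>t. 0 \<le> W t" and int: "weighted_integrable W S (\<lambda>t. u t * u t)"
      "weighted_integrable W S (\<lambda>t. g1 t * u t)" "weighted_integrable W S (\<lambda>t. g2 t * u t)"
      "weighted_integrable W S (\<lambda>t. g1 t * g2 t)"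
    and between: "\<And>t. t \<in> S \<Longrightarrow> g1 t \<le> u t \<and> u t \<le> g2 t"
  shows "weighted_integral W S (\<lambda>t. u t * u t) \<le> weighted_integral W S (\<lambda>t. g1 t * u t)
    + weighted_integral W S (\<lambda>t. g2 t * u t) - weighted_integral W S (\<lambda>t. g1 t * g2 t)"
proof -
  have "weighted_integral W S (\<lambda>t. u t * u t)
      \<le> weighted_integral W S (\<lambda>t. g1 t * u t + g2 t * u t - g1 t * g2 t)"
  proof (rule weighted_integral_mono[OF W int(1)])
    show "weighted_integrable W S (\<lambda>t. g1 t * u t + g2 t * u t - g1 t * g2 t)"
      using int by (simp add: weighted_integral_linear)
    show "u t * u t \<le> g1 t * u t + g2 t * u t - g1 t * g2 t" if "t \<in> S" for t
      using between[OF that] by (simp add: mult_self_le_of_between)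
  qed
  then show ?thesis using int by (simp add: weighted_integral_linear)
qed

section \<open>The Chebyshev form of two weighted integrals\<close>

definition chebyshev_form :: "((real \<Rightarrow> real) \<Rightarrow> real) \<Rightarrow> ((real \<Rightarrow> real) \<Rightarrow> real)
    \<Rightarrow> (real \<Rightarrow> real) \<Rightarrow> (real \<Rightarrow> real) \<Rightarrow> real" where
  "chebyshev_form A D f g =
     D (\<lambda>_. 1) * A (\<lambda>t. f t * g t) + A (\<lambda>_. 1) * D (\<lambda>t. f t * g t) - D f * A g - D g * A f"

lemma square_add_cmult_eq:
  "(\<lambda>s. (u s + t * v s) * (u s + t * v s))
     = (\<lambda>s. (u s * u s + (2 * t) * (u s * v s)) + t\<^sup>2 * (v s * v s))"
  for u v :: "real \<Rightarrow> real"
  by (simp add: fun_eq_iff power2_eq_square algebra_simps)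

locale weight_pair =
  fixes S :: "real set" and Wa Wd :: "real \<Rightarrow> real"
  assumes Wa_nonneg: "0 \<le> Wa t" and Wd_nonneg: "0 \<le> Wd t"
begin

abbreviation A :: "(real \<Rightarrow> real) \<Rightarrow> real" where "A \<equiv> weighted_integral Wa S"
abbreviation D :: "(real \<Rightarrow> real) \<Rightarrow> real" where "D \<equiv> weighted_integral Wd S"
abbreviation H :: "(real \<Rightarrow> real) \<Rightarrow> (real \<Rightarrow> real) \<Rightarrow> real" where "H \<equiv> chebyshev_form A D"

definition admissible :: "(real \<Rightarrow> real) \<Rightarrow> bool" where
  "admissible f \<longleftrightarrow> weighted_integrable Wa S f \<and> weighted_integrable Wd S f"

lemma admissible_add_cmult:
  "admissible f \<Longrightarrow> admissible g \<Longrightarrow> admissible (\<lambda>t. f t + c * g t)"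
  unfolding admissible_def by (simp add: weighted_integral_linear)

lemma chebyshev_form_self_nonneg:
  assumes "admissible (\<lambda>_. 1)" "admissible w" "admissible (\<lambda>t. w t * w t)"
  shows "0 \<le> H w w"
proof -
  have "2 * A w * D w \<le> D (\<lambda>_. 1) * A (\<lambda>t. w t * w t) + A (\<lambda>_. 1) * D (\<lambda>t. w t * w t)"
    using assms unfolding admissible_def
    by (intro two_mult_le_of_squares_le weighted_integral_nonneg weighted_integral_Cauchy_Schwarz)
      (auto intro: Wa_nonneg Wd_nonneg)
  then show ?thesis unfolding chebyshev_form_def by simp
qed

lemma admissible_square_add_cmult:
  assumes "admissible (\<lambda>s. u s * u s)" "admissible (\<lambda>s. u s * v s)" "admissible (\<lambda>s. v s * v s)"
  shows "admissible (\<lambda>s. (u s + t * v s) * (u s + t * v s))"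
  unfolding square_add_cmult_eq using assms by (intro admissible_add_cmult)

lemma chebyshev_form_add_cmult_self:
  assumes "admissible u" "admissible v"
    and "admissible (\<lambda>s. u s * u s)" "admissible (\<lambda>s. u s * v s)" "admissible (\<lambda>s. v s * v s)"
  shows "H (\<lambda>s. u s + t * v s) (\<lambda>s. u s + t * v s) = H u u + 2 * t * H u v + t\<^sup>2 * H v v"
  using assms unfolding chebyshev_form_def square_add_cmult_eq admissible_def
  by (simp add: weighted_integral_linear) (simp add: power2_eq_square algebra_simps)

lemma chebyshev_form_Cauchy_Schwarz:
  assumes "admissible (\<lambda>_. 1)" "admissible u" "admissible v"
    and "admissible (\<lambda>s. u s * u s)" "admissible (\<lambda>s. u s * v s)" "admissible (\<lambda>s. v s * v s)"
  shows "(H u v)\<^sup>2 \<le> H u u * H v v"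
proof (rule discriminant_le_of_quadratic_nonneg)
  show "0 \<le> H v v" using assms by (intro chebyshev_form_self_nonneg)
  fix t
  have "0 \<le> H (\<lambda>s. u s + t * v s) (\<lambda>s. u s + t * v s)"
    using assms by (intro chebyshev_form_self_nonneg admissible_add_cmult admissible_square_add_cmult)
  then show "0 \<le> H u u + 2 * H u v * t + H v v * t\<^sup>2"
    using assms by (simp add: chebyshev_form_add_cmult_self algebra_simps)
qed

lemma chebyshev_form_self_le_kat_K:
  assumes "admissible (\<lambda>_. 1)" "admissible w" "admissible (\<lambda>t. w t * w t)"
    and "admissible (\<lambda>t. g1 t * w t)" "admissible (\<lambda>t. g2 t * w t)" "admissible (\<lambda>t. g1 t * g2 t)"
    and "\<And>t. t \<in> S \<Longrightarrow> g1 t \<le> w t \<and> w t \<le> g2 t"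
  shows "H w w \<le> kat_K A D (A (\<lambda>_. 1)) (D (\<lambda>_. 1)) w g1 g2"
proof -
  txt \<open>The first eight terms of \<open>kat_K\<close> collapse to \<open>- 2 \<cdot> D w \<cdot> A w\<close>, so the claim is
    \<open>H w w\<close> with \<open>w\<^sup>2\<close> replaced by \<open>g\<^sub>1 w + g\<^sub>2 w - g\<^sub>1 g\<^sub>2\<close> under both integrals.\<close>
  have "D (\<lambda>_. 1) * A (\<lambda>t. w t * w t)
      \<le> D (\<lambda>_. 1) * (A (\<lambda>t. g1 t * w t) + A (\<lambda>t. g2 t * w t) - A (\<lambda>t. g1 t * g2 t))"
    using assms unfolding admissible_def
    by (intro mult_left_mono weighted_integral_square_between weighted_integral_nonneg)
      (auto intro: Wa_nonneg Wd_nonneg)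
  moreover have "A (\<lambda>_. 1) * D (\<lambda>t. w t * w t)
      \<le> A (\<lambda>_. 1) * (D (\<lambda>t. g1 t * w t) + D (\<lambda>t. g2 t * w t) - D (\<lambda>t. g1 t * g2 t))"
    using assms unfolding admissible_def
    by (intro mult_left_mono weighted_integral_square_between weighted_integral_nonneg)
      (auto intro: Wa_nonneg Wd_nonneg)
  ultimately show ?thesis
    unfolding chebyshev_form_def kat_K_def by (simp add: algebra_simps)
qed

lemma admissible_square_between:
  assumes "set_borel_measurable lborel S w" "admissible w"
    and "admissible (\<lambda>t. g1 t * w t)" "admissible (\<lambda>t. g2 t * w t)" "admissible (\<lambda>t. g1 t * g2 t)"
    and "\<And>t. t \<in> S \<Longrightarrow> g1 t \<le> w t \<and> w t \<le> g2 t"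
  shows "admissible (\<lambda>t. w t * w t)"
  using assms unfolding admissible_def
  by (auto intro: weighted_integrable_square_between Wa_nonneg Wd_nonneg)

lemma chebyshev_form_abs_le_sqrt_kat_K:
  assumes measurable: "set_borel_measurable lborel S u" "set_borel_measurable lborel S v"
    and bounds_v: "\<And>t. t \<in> S \<Longrightarrow> z1 t \<le> v t \<and> v t \<le> z2 t"
    and bounds_u: "\<And>t. t \<in> S \<Longrightarrow> \<gamma>1 t \<le> u t \<and> u t \<le> \<gamma>2 t"
    and adm: "\<And>f. f \<in> {(\<lambda>t. 1), u, v, (\<lambda>t. u t * v t),
      (\<lambda>t. z1 t * v t), (\<lambda>t. z2 t * v t), (\<lambda>t. z1 t * z2 t),
      (\<lambda>t. \<gamma>1 t * u t), (\<lambda>t. \<gamma>2 t * u t), (\<lambda>t. \<gamma>1 t * \<gamma>2 t)} \<Longrightarrow> admissible f"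
  shows "\<bar>H u v\<bar> \<le> sqrt (kat_K A D (A (\<lambda>_. 1)) (D (\<lambda>_. 1)) v z1 z2
                         * kat_K A D (A (\<lambda>_. 1)) (D (\<lambda>_. 1)) u \<gamma>1 \<gamma>2)"
proof -
  have uu: "admissible (\<lambda>t. u t * u t)"
    by (rule admissible_square_between[of u \<gamma>1 \<gamma>2]) (use measurable bounds_u in \<open>auto intro: adm\<close>)
  have vv: "admissible (\<lambda>t. v t * v t)"
    by (rule admissible_square_between[of v z1 z2]) (use measurable bounds_v in \<open>auto intro: adm\<close>)
  have Ku: "H u u \<le> kat_K A D (A (\<lambda>_. 1)) (D (\<lambda>_. 1)) u \<gamma>1 \<gamma>2"
    using uu bounds_u by (intro chebyshev_form_self_le_kat_K) (auto intro: adm)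
  have Kv: "H v v \<le> kat_K A D (A (\<lambda>_. 1)) (D (\<lambda>_. 1)) v z1 z2"
    using vv bounds_v by (intro chebyshev_form_self_le_kat_K) (auto intro: adm)
  have "0 \<le> H u u" "0 \<le> H v v"
    using uu vv by (auto intro!: chebyshev_form_self_nonneg adm)
  have "\<bar>H u v\<bar> = sqrt ((H u v)\<^sup>2)" by simp
  also have "\<dots> \<le> sqrt (H v v * H u u)"
    using uu vv by (subst mult.commute, intro real_sqrt_le_mono chebyshev_form_Cauchy_Schwarz)
      (auto intro: adm)
  also have "\<dots> \<le> sqrt (kat_K A D (A (\<lambda>_. 1)) (D (\<lambda>_. 1)) v z1 z2
                         * kat_K A D (A (\<lambda>_. 1)) (D (\<lambda>_. 1)) u \<gamma>1 \<gamma>2)"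
    using Ku Kv \<open>0 \<le> H u u\<close> \<open>0 \<le> H v v\<close> by (intro real_sqrt_le_mono mult_mono) auto
  finally show ?thesis .
qed

end

section \<open>The Katugampola kernel\<close>

lemma not_integrable_on_if_ge_inverse:
  fixes f :: "real \<Rightarrow> real" and a b c :: real
  assumes "0 < b" "b < a" "0 < c"
    and "\<And>s. s \<in> {0<..<a} \<Longrightarrow> 0 \<le> f s"
    and ge: "\<And>s. s \<in> {0<..b} \<Longrightarrow> c / s \<le> f s"
  shows "\<not> f integrable_on {0<..<a}"
proof
  assume int: "f integrable_on {0<..<a}"
  define M where "M = integral {0<..<a} f"
  define \<epsilon> where "\<epsilon> = b / exp (\<bar>M\<bar> / c + 1)"
  have "0 < \<bar>M\<bar> / c + 1" using \<open>0 < c\<close> by (simp add: add_nonneg_pos)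
  then have \<epsilon>: "0 < \<epsilon>" "\<epsilon> < b"
    using assms by (auto simp: \<epsilon>_def divide_less_eq)
  have "((\<lambda>s. c / s) has_integral (c * ln b - c * ln \<epsilon>)) {\<epsilon>..b}"
  proof (rule fundamental_theorem_of_calculus)
    fix s assume "s \<in> {\<epsilon>..b}"
    with \<epsilon> have "((\<lambda>s. c * ln s) has_real_derivative c * (1 / s)) (at s)"
      by (intro DERIV_cmult DERIV_ln_divide) auto
    then show "((\<lambda>s. c * ln s) has_vector_derivative c / s) (at s within {\<epsilon>..b})"
      by (simp add: has_real_derivative_iff_has_vector_derivative[symmetric] has_field_derivative_at_within)
  qed (use \<epsilon> in simp)
  moreover have int_sub: "f integrable_on {\<epsilon>..b}"
    by (rule integrable_on_subinterval[OF int]) (use \<epsilon> assms in auto)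
  ultimately have "c * ln b - c * ln \<epsilon> \<le> integral {\<epsilon>..b} f"
    by (rule has_integral_le[OF _ integrable_integral]) (use \<epsilon> ge in auto)
  also have "\<dots> \<le> M"
    unfolding M_def by (rule integral_subset_le) (use \<epsilon> assms int int_sub in auto)
  also have "c * ln b - c * ln \<epsilon> = \<bar>M\<bar> + c"
    using assms by (simp add: \<epsilon>_def ln_div algebra_simps)
  finally show False using \<open>0 < c\<close> by linarith
qed

lemma Beta_integrand_integrable_on_imp_gt:
  fixes \<eta> \<gamma> :: real
  assumes "(\<lambda>s. s powr \<eta> * (1 - s) powr \<gamma>) integrable_on {0<..<1}"
  shows "-1 < \<eta>"
proof (rule ccontr)
  assume "\<not> -1 < \<eta>"
  have "(1/2) powr \<bar>\<gamma>\<bar> / s \<le> s powr \<eta> * (1 - s) powr \<gamma>" if s: "s \<in> {0<..1/2}" for s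
  proof -
    have "1 / s \<le> s powr \<eta>"
      using s \<open>\<not> -1 < \<eta>\<close> powr_mono'[of \<eta> "-1" s] by (simp add: powr_neg_one)
    moreover have "(1/2) powr \<bar>\<gamma>\<bar> \<le> (1 - s) powr \<gamma>"
    proof (cases "0 \<le> \<gamma>")
      case True
      then show ?thesis using s by (simp add: powr_mono2)
    next
      case False
      then have "(1/2) powr \<bar>\<gamma>\<bar> \<le> 1" by (intro powr_le1) auto
      also have "1 \<le> (1 - s) powr \<gamma>" using False s powr_mono2'[of \<gamma> "1 - s" 1] by simp
      finally show ?thesis .
    qed
    ultimately have "(1/2) powr \<bar>\<gamma>\<bar> * (1 / s) \<le> (1 - s) powr \<gamma> * s powr \<eta>"
      using s by (intro mult_mono) auto
    then show ?thesis by (simp add: mult.commute)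
  qed
  then have "\<not> (\<lambda>s. s powr \<eta> * (1 - s) powr \<gamma>) integrable_on {0<..<1}"
    by (intro not_integrable_on_if_ge_inverse[where b = "1/2"]) auto
  with assms show False by contradiction
qed

lemma bij_betw_scaled_root:
  fixes x \<rho> :: real
  assumes "0 < x" "0 < \<rho>"
  shows "bij_betw (\<lambda>s. x * s powr (1/\<rho>)) {0<..<1} {0<..<x}"
proof (rule bij_betw_byWitness[where f' = "\<lambda>t. (t / x) powr \<rho>"])
  show "\<forall>s\<in>{0<..<1}. ((x * s powr (1/\<rho>)) / x) powr \<rho> = s"
    using assms by (simp add: powr_powr)
  show "\<forall>t\<in>{0<..<x}. x * ((t / x) powr \<rho>) powr (1/\<rho>) = t"
    using assms by (simp add: powr_powr)
  have "s powr (1/\<rho>) < 1" if "0 < s" "s < 1" for s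
    using that assms powr_less_mono2[of "1/\<rho>" s 1] by simp
  then show "(\<lambda>s. x * s powr (1/\<rho>)) ` {0<..<1} \<subseteq> {0<..<x}"
    using assms by auto
  have "(t / x) powr \<rho> < 1" if "0 < t" "t < x" for t
    using that assms powr_less_mono2[of \<rho> "t / x" 1] by simp
  then show "(\<lambda>t. (t / x) powr \<rho>) ` {0<..<x} \<subseteq> {0<..<1}"
    using assms by auto
qed

lemma kat_kernel_substitution:
  fixes x \<rho> \<alpha> \<eta> s :: real
  assumes x: "0 < x" and \<rho>: "0 < \<rho>" and s: "0 < s" "s < 1"
  shows "x * (1/\<rho> * s powr (1/\<rho> - 1)) * kat_kernel \<rho> \<alpha> \<eta> x (x * s powr (1/\<rho>))
     = x powr (\<rho> * (\<eta> + \<alpha>)) / \<rho> * (s powr \<eta> * (1 - s) powr (\<alpha> - 1))"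
proof -
  have "(x * s powr (1/\<rho>)) powr \<rho> = x powr \<rho> * s"
    using x s \<rho> by (simp add: powr_mult powr_powr)
  moreover have "x powr \<rho> - x powr \<rho> * s = x powr \<rho> * (1 - s)"
    by (simp add: right_diff_distrib)
  ultimately have "x * (1/\<rho> * s powr (1/\<rho> - 1)) * kat_kernel \<rho> \<alpha> \<eta> x (x * s powr (1/\<rho>))
      = x * (1/\<rho> * s powr (1/\<rho> - 1)) * ((x * s powr (1/\<rho>)) powr (\<rho> * (\<eta> + 1) - 1)
          / (x powr \<rho> * (1 - s)) powr (1 - \<alpha>))"
    unfolding kat_kernel_def by simp
  also have "\<dots> = exp (ln x) * (1/\<rho> * exp ((1/\<rho> - 1) * ln s))
      * (exp ((\<rho> * (\<eta> + 1) - 1) * (ln x + 1/\<rho> * ln s)) / exp ((1 - \<alpha>) * (\<rho> * ln x + ln (1 - s))))"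
    using x s by (simp add: powr_def ln_mult)
  also have "\<dots> = exp (\<rho> * (\<eta> + \<alpha>) * ln x) / \<rho> * (exp (\<eta> * ln s) * exp ((\<alpha> - 1) * ln (1 - s)))"
    using \<rho> by (simp add: exp_add[symmetric] exp_diff[symmetric] field_simps del: exp_ln)
  also have "\<dots> = x powr (\<rho> * (\<eta> + \<alpha>)) / \<rho> * (s powr \<eta> * (1 - s) powr (\<alpha> - 1))"
    using x s by (simp add: powr_def)
  finally show ?thesis .
qed

lemma kat_kernel_change_of_variables:
  fixes x \<rho> \<alpha> \<eta> :: real
  assumes x: "0 < x" and \<rho>: "0 < \<rho>"
    and int: "kat_kernel \<rho> \<alpha> \<eta> x absolutely_integrable_on {0<..<x}"
  shows "((\<lambda>s. x powr (\<rho> * (\<eta> + \<alpha>)) / \<rho> * (s powr \<eta> * (1 - s) powr (\<alpha> - 1)))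
           has_integral integral {0<..<x} (kat_kernel \<rho> \<alpha> \<eta> x)) {0<..<1}"
proof -
  define g where "g = (\<lambda>s::real. x * s powr (1/\<rho>))"
  define g' where "g' = (\<lambda>s::real. x * (1/\<rho> * s powr (1/\<rho> - 1)))"
  have "inj_on g {0<..<1}" "g ` {0<..<1} = {0<..<x}"
    using bij_betw_scaled_root[OF x \<rho>] by (simp_all add: bij_betw_def g_def)
  moreover have "(g has_field_derivative g' s) (at s within {0<..<1})" if "s \<in> {0<..<1}" for s
    unfolding g_def g'_def
    by (rule has_field_derivative_at_within, intro DERIV_cmult has_real_derivative_powr) (use that in simp)
  ultimately have "(\<lambda>s. \<bar>g' s\<bar> * kat_kernel \<rho> \<alpha> \<eta> x (g s)) absolutely_integrable_on {0<..<1}"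
      "integral {0<..<1} (\<lambda>s. \<bar>g' s\<bar> * kat_kernel \<rho> \<alpha> \<eta> x (g s))
         = integral {0<..<x} (kat_kernel \<rho> \<alpha> \<eta> x)"
    using int has_absolute_integral_change_of_variables_1'[of "{0<..<1}" g g' "kat_kernel \<rho> \<alpha> \<eta> x"]
    by auto
  then have "((\<lambda>s. \<bar>g' s\<bar> * kat_kernel \<rho> \<alpha> \<eta> x (g s))
      has_integral integral {0<..<x} (kat_kernel \<rho> \<alpha> \<eta> x)) {0<..<1}"
    by (metis integrable_integral set_lebesgue_integral_eq_integral(1))
  then show ?thesis
    by (rule has_integral_eq[rotated])
      (use x \<rho> kat_kernel_substitution[OF x \<rho>] in \<open>simp add: g_def g'_def\<close>)
qed

lemma kat_kernel_integral:
  fixes x \<rho> \<alpha> \<eta> :: real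
  assumes x: "0 < x" and \<rho>: "0 < \<rho>" and \<alpha>: "0 < \<alpha>"
    and int: "set_integrable lborel {0<..<x} (kat_kernel \<rho> \<alpha> \<eta> x)"
  shows "-1 < \<eta>"
    and "(LINT \<tau>:{0<..<x}|lborel. kat_kernel \<rho> \<alpha> \<eta> x \<tau>)
           = x powr (\<rho> * (\<eta> + \<alpha>)) / \<rho> * Beta (\<eta> + 1) \<alpha>"
proof -
  define C where "C = x powr (\<rho> * (\<eta> + \<alpha>)) / \<rho>"
  define B where "B = (\<lambda>s::real. s powr \<eta> * (1 - s) powr (\<alpha> - 1))"
  have C: "C \<noteq> 0" using x \<rho> by (simp add: C_def)
  have K_int: "kat_kernel \<rho> \<alpha> \<eta> x integrable_on {0<..<x}"
    and K_eq: "(LINT \<tau>:{0<..<x}|lborel. kat_kernel \<rho> \<alpha> \<eta> x \<tau>) = integral {0<..<x} (kat_kernel \<rho> \<alpha> \<eta> x)"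
    using set_borel_integral_eq_integral[OF int] by simp_all
  have "kat_kernel \<rho> \<alpha> \<eta> x absolutely_integrable_on {0<..<x}"
    by (rule nonnegative_absolutely_integrable_1[OF K_int]) (simp add: kat_kernel_def)
  then have CB: "((\<lambda>s. C * B s) has_integral integral {0<..<x} (kat_kernel \<rho> \<alpha> \<eta> x)) {0<..<1}"
    unfolding C_def B_def by (rule kat_kernel_change_of_variables[OF x \<rho>])
  then have "B integrable_on {0<..<1}"
    using C by (simp add: has_integral_integrable_integral)
  then show \<eta>: "-1 < \<eta>"
    unfolding B_def by (rule Beta_integrand_integrable_on_imp_gt)
  have "(B has_integral Beta (\<eta> + 1) \<alpha>) {0<..<1}"
    using has_integral_Beta_real[of "\<eta> + 1" \<alpha>] \<eta> \<alpha>
    by (simp add: B_def has_integral_Icc_iff_Ioo)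
  then have "integral {0<..<x} (kat_kernel \<rho> \<alpha> \<eta> x) = C * Beta (\<eta> + 1) \<alpha>"
    using CB by (metis has_integral_mult_right has_integral_unique)
  then show "(LINT \<tau>:{0<..<x}|lborel. kat_kernel \<rho> \<alpha> \<eta> x \<tau>)
      = x powr (\<rho> * (\<eta> + \<alpha>)) / \<rho> * Beta (\<eta> + 1) \<alpha>"
    using K_eq by (simp add: C_def)
qed

definition kat_weight :: "real \<Rightarrow> real \<Rightarrow> real \<Rightarrow> real \<Rightarrow> real \<Rightarrow> real \<Rightarrow> real \<Rightarrow> real" where
  "kat_weight \<rho> \<alpha> \<beta> \<eta> k x \<tau> = \<rho> powr (1 - \<beta>) * x powr k / Gamma \<alpha> * kat_kernel \<rho> \<alpha> \<eta> x \<tau>"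

lemma kat_weight_nonneg: "0 < \<alpha> \<Longrightarrow> 0 \<le> kat_weight \<rho> \<alpha> \<beta> \<eta> k x \<tau>"
  by (simp add: kat_weight_def kat_kernel_def)

lemma kat_J_eq_weighted_integral:
  "kat_J \<rho> \<alpha> \<beta> \<eta> k f x = weighted_integral (kat_weight \<rho> \<alpha> \<beta> \<eta> k x) {0<..<x} f"
  by (simp add: kat_J_def weighted_integral_def kat_weight_def mult.assoc)

lemma kat_exists_imp_weighted_integrable:
  "kat_exists \<rho> \<alpha> \<eta> f x \<Longrightarrow> weighted_integrable (kat_weight \<rho> \<alpha> \<beta> \<eta> k x) {0<..<x} f"
  by (simp add: kat_exists_def weighted_integrable_def kat_weight_def mult.assoc)

lemma kat_J_one_eq_kat_Lambda:
  assumes "0 < x" "0 < \<rho>" "0 < \<alpha>" and "kat_exists \<rho> \<alpha> \<eta> (\<lambda>_. 1) x"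
  shows "kat_J \<rho> \<alpha> \<beta> \<eta> k (\<lambda>_. 1) x = kat_Lambda \<rho> \<beta> x k \<alpha> \<eta>"
proof -
  have "set_integrable lborel {0<..<x} (kat_kernel \<rho> \<alpha> \<eta> x)"
    using assms(4) by (simp add: kat_exists_def)
  note kernel = kat_kernel_integral[OF assms(1-3) this]
  have "kat_J \<rho> \<alpha> \<beta> \<eta> k (\<lambda>_. 1) x
      = \<rho> powr (1 - \<beta>) * x powr k / Gamma \<alpha> * (x powr (\<rho> * (\<eta> + \<alpha>)) / \<rho> * Beta (\<eta> + 1) \<alpha>)"
    using kernel(2) by (simp add: kat_J_def)
  also have "\<dots> = Gamma (\<eta> + 1) / Gamma (\<eta> + \<alpha> + 1) * (\<rho> powr (1 - \<beta>) / \<rho>)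
      * (x powr k * x powr (\<rho> * (\<eta> + \<alpha>)))"
    using Gamma_real_pos[OF assms(3)] by (simp add: Beta_def field_simps add_ac)
  also have "\<rho> powr (1 - \<beta>) / \<rho> = \<rho> powr (- \<beta>)"
    using assms(2) by (simp add: powr_diff powr_minus_divide)
  also have "x powr k * x powr (\<rho> * (\<eta> + \<alpha>)) = x powr (k + \<rho> * (\<eta> + \<alpha>))"
    by (simp add: powr_add)
  finally show ?thesis by (simp add: kat_Lambda_def mult.assoc)
qed

theorem theorem3:
  fixes v u z1 z2 \<gamma>1 \<gamma>2 :: "real \<Rightarrow> real"
    and x \<alpha> \<delta> \<rho> \<beta> lam \<eta> k :: real
  assumes int_fun: "set_integrable lborel {0..} v" "set_integrable lborel {0..} u"
      "set_integrable lborel {0..} z1" "set_integrable lborel {0..} z2"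
      "set_integrable lborel {0..} \<gamma>1" "set_integrable lborel {0..} \<gamma>2"
    and bounds_v: "\<And>t. t \<ge> 0 \<Longrightarrow> z1 t \<le> v t \<and> v t \<le> z2 t"
    and bounds_u: "\<And>t. t \<ge> 0 \<Longrightarrow> \<gamma>1 t \<le> u t \<and> u t \<le> \<gamma>2 t"
    and pos: "x > 0" "\<alpha> > 0" "\<delta> > 0" "\<rho> > 0"
    and exists: "\<And>a f. a \<in> {\<alpha>, \<delta>} \<Longrightarrow>
        f \<in> {(\<lambda>t. 1), u, v, (\<lambda>t. u t * v t), (\<lambda>t. v t * u t),
              z1, z2, (\<lambda>t. z1 t * v t), (\<lambda>t. z2 t * v t), (\<lambda>t. z1 t * z2 t),
              \<gamma>1, \<gamma>2, (\<lambda>t. \<gamma>1 t * u t), (\<lambda>t. \<gamma>2 t * u t), (\<lambda>t. \<gamma>1 t * \<gamma>2 t)} \<Longrightarrow>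
        kat_exists \<rho> a \<eta> f x"
  shows "\<bar>kat_Lambda \<rho> lam x k \<delta> \<eta> * kat_J \<rho> \<alpha> \<beta> \<eta> k (\<lambda>t. u t * v t) x
          + kat_Lambda \<rho> \<beta> x k \<alpha> \<eta> * kat_J \<rho> \<delta> lam \<eta> k (\<lambda>t. v t * u t) x
          - kat_J \<rho> \<delta> lam \<eta> k u x * kat_J \<rho> \<alpha> \<beta> \<eta> k v x
          - kat_J \<rho> \<delta> lam \<eta> k v x * kat_J \<rho> \<alpha> \<beta> \<eta> k u x\<bar>
     \<le> sqrt (kat_K (\<lambda>f. kat_J \<rho> \<alpha> \<beta> \<eta> k f x) (\<lambda>f. kat_J \<rho> \<delta> lam \<eta> k f x)
                 (kat_Lambda \<rho> \<beta> x k \<alpha> \<eta>) (kat_Lambda \<rho> lam x k \<delta> \<eta>) v z1 z2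
             * kat_K (\<lambda>f. kat_J \<rho> \<alpha> \<beta> \<eta> k f x) (\<lambda>f. kat_J \<rho> \<delta> lam \<eta> k f x)
                 (kat_Lambda \<rho> \<beta> x k \<alpha> \<eta>) (kat_Lambda \<rho> lam x k \<delta> \<eta>) u \<gamma>1 \<gamma>2)"
proof -
  interpret weight_pair "{0<..<x}" "kat_weight \<rho> \<alpha> \<beta> \<eta> k x" "kat_weight \<rho> \<delta> lam \<eta> k x"
    using pos by unfold_locales (simp_all add: kat_weight_nonneg)
  have measurable: "set_borel_measurable lborel {0<..<x} f"
    if "set_integrable lborel {0..} f" for f :: "real \<Rightarrow> real"
  proof -
    have "set_integrable lborel {0<..<x} f" by (rule set_integrable_subset[OF that]) auto
    then show ?thesis
      unfolding set_integrable_def set_borel_measurable_def by (rule borel_measurable_integrable)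
  qed
  have "\<bar>H u v\<bar> \<le> sqrt (kat_K A D (A (\<lambda>_. 1)) (D (\<lambda>_. 1)) v z1 z2
                         * kat_K A D (A (\<lambda>_. 1)) (D (\<lambda>_. 1)) u \<gamma>1 \<gamma>2)"
    using int_fun bounds_u bounds_v exists
    by (intro chebyshev_form_abs_le_sqrt_kat_K measurable)
      (auto simp: admissible_def intro: kat_exists_imp_weighted_integrable)
  moreover have "A (\<lambda>_. 1) = kat_Lambda \<rho> \<beta> x k \<alpha> \<eta>" "D (\<lambda>_. 1) = kat_Lambda \<rho> lam x k \<delta> \<eta>"
    using pos exists by (simp_all flip: kat_J_eq_weighted_integral add: kat_J_one_eq_kat_Lambda)
  moreover have "(\<lambda>t. v t * u t) = (\<lambda>t. u t * v t)" by (simp add: mult.commute)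
  ultimately show ?thesis by (simp add: chebyshev_form_def kat_J_eq_weighted_integral)
qed

end
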